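(* Let $\Sigma=(0,\infty]$, ordered by the usual order $\le$, and let $c\in\mathbb{R}$ with $c>0$. Fix $z\in\Sigma^{\infty}$ with $l(z)=\infty$ and $z_k\neq\infty$ for all $k\in\mathbb{N}$ with $k\ge2$. Let $\Sigma_c^{\infty}:=\{y\in\Sigma^{\infty}: 2\le l(y) \text{ and } y_1=c\}$. Define $\Psi^z:\Sigma_c^{\infty}\to\Sigma_c^{\infty}$ by $\Psi^z(x)=x_{\Psi^z}$, where $$(x_{\Psi^z})_k:=\begin{cases} c & \text{if } k=1,\\ x_{k-1}+z_k & \text{if } 2\le k\le l(x)+1.\end{cases}$$ Then $\Psi^z$ has a unique fixed point $v\in\Sigma_c^{\infty}$, and $l(v)=\infty$. Moreover, if $u\in\Sigma_c^{\infty}$ satisfies $\Psi^z(u)\sqsubseteq_{sp}u$, then $v\sqsubseteq_{sp}u$.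
   Context: $\mathbb{N}$ is the set of positive integers. $\Sigma^{\infty}$ is the set of all nonempty finite and infinite words over $\Sigma$; $l(x)\in[1,\infty]$ is the length of $x$ and $x_k$ its $k$-th letter (so for infinite $x$, $l(x)+1=\infty$). For $x,y\in\Sigma^\infty$, $x\sqsubseteq_{sp}y$ ("$x$ is a subprefix of $y$") means there exists $n_0\in\mathbb{N}$ with $n_0\le l(x)$ such that $x_k\le y_k$ for all $k\le n_0$. Arithmetic on $(0,\infty]$ uses the usual conventions with $\infty$. *)

theory Defs
  imports Main "HOL-Library.Extended_Nonnegative_Real"
begin

text \<open>Letters come from Sigma = (0, infinity], represented as the positive elements of ennreal.
A word is a pair (length, letters) where the length is an element of enat with length >= 1
(infinity for infinite words), letters are indexed from 1, and positions outside 1..length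
carry the dummy value 0 (so that the representation is canonical).\<close>

type_synonym word = "enat \<times> (nat \<Rightarrow> ennreal)"

definition len :: "word \<Rightarrow> enat" where "len w = fst w"

definition letter :: "word \<Rightarrow> nat \<Rightarrow> ennreal" where "letter w k = snd w k"

definition Words :: "word set" where
  "Words = {w. 1 \<le> len w
      \<and> (\<forall>k. 1 \<le> k \<and> enat k \<le> len w \<longrightarrow> 0 < letter w k)
      \<and> (\<forall>k. \<not> (1 \<le> k \<and> enat k \<le> len w) \<longrightarrow> letter w k = 0)}"

definition Words_c :: "real \<Rightarrow> word set" where
  "Words_c c = {y \<in> Words. 2 \<le> len y \<and> letter y 1 = ennreal c}"

definition Psi :: "real \<Rightarrow> word \<Rightarrow> word \<Rightarrow> word" where
  "Psi c z x = (len x + 1,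
     \<lambda>k. if k = 1 then ennreal c
         else if 2 \<le> k \<and> enat k \<le> len x + 1 then letter x (k - 1) + letter z k
         else 0)"

definition subprefix :: "word \<Rightarrow> word \<Rightarrow> bool" where
  "subprefix x y \<longleftrightarrow> (\<exists>n0::nat. 1 \<le> n0 \<and> enat n0 \<le> len x \<and> enat n0 \<le> len y
      \<and> (\<forall>k. 1 \<le> k \<and> k \<le> n0 \<longrightarrow> letter x k \<le> letter y k))"

end

theory Submission
  imports Defs
begin

text \<open>Reading the fixed-point equation letter by letter forces v(1) = c and
  v(k) = v(k-1) + z(k), so v(k) = c + z(2) + ... + z(k), while the length equation
  l(v) = l(v) + 1 forces l(v) = \<infinity>. If \<Psi>(u) lies letterwise below u up to n0, the same
  recursion read as inequalities gives v(k) \<le> u(k) for all k \<le> n0 by induction.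
  Since addition in ennreal absorbs \<infinity>, no finiteness or positivity of z is needed.\<close>

definition partial_sums_word :: "real \<Rightarrow> word \<Rightarrow> word" where
  "partial_sums_word c z =
     (\<infinity>, \<lambda>k. if k = 0 then 0 else ennreal c + (\<Sum>j\<in>{2..k}. letter z j))"

lemma len_partial_sums_word [simp]: "len (partial_sums_word c z) = \<infinity>"
  by (simp add: partial_sums_word_def len_def)

lemma letter_partial_sums_word_0 [simp]: "letter (partial_sums_word c z) 0 = 0"
  by (simp add: partial_sums_word_def letter_def)

lemma letter_partial_sums_word_1 [simp]: "letter (partial_sums_word c z) (Suc 0) = ennreal c"
  by (simp add: partial_sums_word_def letter_def)

lemma letter_partial_sums_word_Suc:
  assumes "1 \<le> k"
  shows "letter (partial_sums_word c z) (Suc k) = letter (partial_sums_word c z) k + letter z (Suc k)"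
proof -
  have "{2..Suc k} = insert (Suc k) {2..k}" using assms by auto
  then show ?thesis
    using assms by (simp add: partial_sums_word_def letter_def add.commute add.left_commute)
qed

lemma partial_sums_word_in_Words_c:
  assumes "0 < c"
  shows "partial_sums_word c z \<in> Words_c c"
  using assms
  by (auto simp: Words_c_def Words_def partial_sums_word_def len_def letter_def add_pos_nonneg)

lemma len_Psi [simp]: "len (Psi c z x) = len x + 1"
  by (simp add: Psi_def len_def)

lemma letter_Psi:
  "letter (Psi c z x) k = (if k = 1 then ennreal c
     else if 2 \<le> k \<and> enat k \<le> len x + 1 then letter x (k - 1) + letter z k else 0)"
  by (simp add: Psi_def letter_def)

lemma letter_Psi_Suc:
  assumes "1 \<le> k" "enat k \<le> len x"
  shows "letter (Psi c z x) (Suc k) = letter x k + letter z (Suc k)"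
proof -
  have "enat (Suc k) \<le> len x + 1"
    using assms(2) by (metis Suc_eq_plus1 add_right_mono one_enat_def plus_enat_simps(1))
  then show ?thesis using assms(1) by (simp add: letter_Psi)
qed

lemma word_eqI: "len x = len y \<Longrightarrow> (\<And>k. letter x k = letter y k) \<Longrightarrow> x = y"
  by (simp add: len_def letter_def prod_eq_iff fun_eq_iff)

lemma Psi_fixed_imp_len_infinite:
  assumes "Psi c z w = w"
  shows "len w = \<infinity>"
proof -
  have "len w = len w + 1" using len_Psi[of c z w] assms by simp
  then show ?thesis by (cases "len w") auto
qed

lemma Psi_partial_sums_word: "Psi c z (partial_sums_word c z) = partial_sums_word c z"
proof (rule word_eqI)
  fix k
  show "letter (Psi c z (partial_sums_word c z)) k = letter (partial_sums_word c z) k"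
  proof (cases k)
    case (Suc m)
    then show ?thesis
      by (cases "m = 0") (simp_all add: letter_Psi letter_partial_sums_word_Suc)
  qed (simp add: letter_Psi)
qed simp

lemma Psi_fixed_imp_partial_sums_word:
  assumes fixed: "Psi c z w = w"
  shows "w = partial_sums_word c z"
proof (rule word_eqI)
  have len_w: "len w = \<infinity>" using fixed by (rule Psi_fixed_imp_len_infinite)
  then show "len w = len (partial_sums_word c z)" by simp
  have letter_w: "letter w k = letter (Psi c z w) k" for k
    using fixed by simp
  fix k
  show "letter w k = letter (partial_sums_word c z) k"
  proof (induction k)
    case 0
    then show ?case using letter_w[of 0] by (simp add: letter_Psi)
  next
    case (Suc m)
    then show ?case
      using letter_w[of "Suc m"] len_w
      by (cases "m = 0") (simp_all add: letter_Psi letter_partial_sums_word_Suc)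
  qed
qed

lemma partial_sums_word_le_if_Psi_le:
  assumes Psi_le: "\<forall>k. 1 \<le> k \<and> k \<le> n \<longrightarrow> letter (Psi c z u) k \<le> letter u k"
    and len_u: "enat n \<le> len u"
    and "1 \<le> k" "k \<le> n"
  shows "letter (partial_sums_word c z) k \<le> letter u k"
  using assms(3,4)
proof (induction k rule: dec_induct)
  case base
  then show ?case using Psi_le by (auto simp: letter_Psi)
next
  case (step m)
  have "m \<le> n" using step.hyps(2) \<open>k \<le> n\<close> by simp
  then have "enat m \<le> len u" using len_u enat_ord_simps(1) order_trans by blast
  then have "letter (partial_sums_word c z) (Suc m) \<le> letter (Psi c z u) (Suc m)"
    using step by (simp add: letter_Psi_Suc letter_partial_sums_word_Suc add_right_mono)
  also have "\<dots> \<le> letter u (Suc m)" using Psi_le step.hyps \<open>k \<le> n\<close> by simp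
  finally show ?case .
qed

lemma subprefix_partial_sums_word:
  assumes "subprefix (Psi c z u) u"
  shows "subprefix (partial_sums_word c z) u"
proof -
  obtain n where n: "1 \<le> n" "enat n \<le> len u"
    and Psi_le: "\<forall>k. 1 \<le> k \<and> k \<le> n \<longrightarrow> letter (Psi c z u) k \<le> letter u k"
    using assms unfolding subprefix_def by blast
  then show ?thesis
    unfolding subprefix_def
    using partial_sums_word_le_if_Psi_le[OF Psi_le n(2)] by auto
qed

theorem theorem11:
  fixes c :: real and z :: word
  assumes "0 < c"
    and "z \<in> Words"
    and "len z = \<infinity>"
    and "\<forall>k::nat. 2 \<le> k \<longrightarrow> letter z k \<noteq> \<infinity>"
  shows "\<exists>v. v \<in> Words_c c \<and> Psi c z v = v
           \<and> (\<forall>w \<in> Words_c c. Psi c z w = w \<longrightarrow> w = v)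
           \<and> len v = \<infinity>
           \<and> (\<forall>u \<in> Words_c c. subprefix (Psi c z u) u \<longrightarrow> subprefix v u)"
proof (intro exI conjI ballI impI)
  show "partial_sums_word c z \<in> Words_c c"
    using \<open>0 < c\<close> by (rule partial_sums_word_in_Words_c)
qed (simp_all add: Psi_partial_sums_word Psi_fixed_imp_partial_sums_word
       subprefix_partial_sums_word)

end
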